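(* Fix an $s \times t$ matrix $A$. There exists a polynomial $p$ (depending only on $A$) such that for every $\epsilon > 0$, with $\delta = 1/p(\epsilon^{-1})$: if an $s \times n$ matrix $T$ contains $\epsilon n$ pairwise-disjoint copies of $A$, then the total number of copies of $A$ in $T$ is at least $\delta n^t$.
   Context: Matrices have ordered rows and columns. A copy of $A$ in $T$ is an $s\times t$ submatrix of $T$ (obtained by selecting $t$ columns $c_1<\dots<c_t$, keeping all $s$ rows, in order) equal to $A$; copies are pairwise disjoint if no entry of $T$ lies in two of them. *)

theory Defs
  imports "HOL-Computational_Algebra.Polynomial"
begin

text \<open>Matrices are functions from (row, column) indices to entries; only entries with
row < s and column < (number of columns) are meaningful. A copy of the s x t matrix A in the
s x n matrix T is determined by its set C of t columns c_1 < ... < c_t (all s rows kept);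
the j-th smallest element of C is sorted_list_of_set C ! j.\<close>

definition is_copy ::
  "(nat \<Rightarrow> nat \<Rightarrow> 'a) \<Rightarrow> nat \<Rightarrow> nat \<Rightarrow> (nat \<Rightarrow> nat \<Rightarrow> 'a) \<Rightarrow> nat \<Rightarrow> nat set \<Rightarrow> bool"
  where
  "is_copy A s t T n C \<longleftrightarrow>
     C \<subseteq> {..<n} \<and> card C = t \<and>
     (\<forall>i<s. \<forall>j<t. T i (sorted_list_of_set C ! j) = A i j)"

definition copy_entries :: "nat \<Rightarrow> nat set \<Rightarrow> (nat \<times> nat) set" where
  "copy_entries s C = {..<s} \<times> C"

definition num_copies ::
  "(nat \<Rightarrow> nat \<Rightarrow> 'a) \<Rightarrow> nat \<Rightarrow> nat \<Rightarrow> (nat \<Rightarrow> nat \<Rightarrow> 'a) \<Rightarrow> nat \<Rightarrow> nat" where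
  "num_copies A s t T n = card {C. is_copy A s t T n C}"

end

theory Submission
  imports Defs
begin

text \<open>Let F consist of m \<ge> \<epsilon> n pairwise disjoint copies of A; for s > 0 their column sets are
pairwise disjoint. For j < t let a_j(0) < ... < a_j(m-1) be the j-th columns of the members of F
in increasing order. Every copy has its j-th column left of its (j+1)-th, so the i-th smallest
j-th column lies left of the i-th smallest (j+1)-th column: a_j(i) < a_(j+1)(i). Hence for every
i_0 < ... < i_(t-1) the columns a_0(i_0) < ... < a_(t-1)(i_(t-1)) carry a copy of A, which gives at
least (m choose t) \<ge> (\<epsilon> n / t)^t copies; p(x) = t^t (1 + x^t) also covers the degenerate
cases.\<close>

lemma nth_sorted_list_of_set_mem:
  assumes "finite S" "j < card S"
  shows "sorted_list_of_set S ! j \<in> S"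
  using assms nth_mem[of j "sorted_list_of_set S"] by simp

lemma obtain_nth_sorted_list_of_set:
  assumes "finite S" "x \<in> S"
  obtains j where "j < card S" "x = sorted_list_of_set S ! j"
proof -
  have "x \<in> set (sorted_list_of_set S)" using assms by simp
  then show ?thesis
    using that in_set_conv_nth[of x "sorted_list_of_set S"] assms(1) by auto
qed

lemma strict_mono_on_nth_sorted_list_of_set:
  fixes S :: "'a::linorder set"
  assumes "finite S"
  shows "strict_mono_on {..<card S} (\<lambda>i. sorted_list_of_set S ! i)"
  using sorted_wrt_nth_less[OF strict_sorted_list_of_set[of S]] assms
  unfolding strict_mono_on_def by simp

lemma inj_on_nth_sorted_list_of_set:
  assumes "pairwise disjnt F" "\<And>C. C \<in> F \<Longrightarrow> finite C \<and> j < card C"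
  shows "inj_on (\<lambda>C. sorted_list_of_set C ! j) F"
proof (rule inj_onI)
  fix C D assume CD: "C \<in> F" "D \<in> F" "sorted_list_of_set C ! j = sorted_list_of_set D ! j"
  then have "\<not> disjnt C D"
    using nth_sorted_list_of_set_mem[of C j] nth_sorted_list_of_set_mem[of D j] assms(2)
    by (auto simp: disjnt_def)
  then show "C = D" using assms(1) CD(1,2) unfolding pairwise_def by blast
qed

lemma card_less_nth_sorted_list_of_set:
  fixes S :: "'a::linorder set"
  assumes "finite S" "k < card S"
  shows "card {y\<in>S. y < sorted_list_of_set S ! k} = k"
proof -
  let ?xs = "sorted_list_of_set S"
  have len: "length ?xs = card S" and sorted: "sorted_wrt (<) ?xs" by simp_all
  have "{y\<in>S. y < ?xs ! k} = (!) ?xs ` {..<k}"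
  proof (intro equalityI subsetI)
    fix y assume "y \<in> {y\<in>S. y < ?xs ! k}"
    then obtain i where i: "i < card S" "y = ?xs ! i" "y < ?xs ! k"
      using assms(1) by (auto elim: obtain_nth_sorted_list_of_set)
    have "i < k"
    proof (rule ccontr)
      assume "\<not> i < k"
      then have "?xs ! k \<le> ?xs ! i"
        using sorted_nth_mono[OF sorted_sorted_list_of_set[of S]] i(1) len by simp
      then show False using i by simp
    qed
    then show "y \<in> (!) ?xs ` {..<k}" using i by auto
  next
    fix y assume "y \<in> (!) ?xs ` {..<k}"
    then obtain i where "i < k" "y = ?xs ! i" by auto
    then show "y \<in> {y\<in>S. y < ?xs ! k}"
      using sorted_wrt_nth_less[OF sorted] nth_mem[of i ?xs] assms len by auto
  qed
  moreover have "inj_on ((!) ?xs) {..<k}"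
    using assms len by (intro inj_onI) (simp add: nth_eq_iff_index_eq)
  ultimately show ?thesis by (simp add: card_image)
qed

lemma nth_sorted_list_of_image_less:
  fixes f g :: "'b \<Rightarrow> 'a::linorder"
  assumes "finite F" "inj_on f F" "inj_on g F" "\<And>C. C \<in> F \<Longrightarrow> f C < g C" "k < card F"
  shows "sorted_list_of_set (f ` F) ! k < sorted_list_of_set (g ` F) ! k"
proof -
  let ?a = "sorted_list_of_set (f ` F) ! k" and ?b = "sorted_list_of_set (g ` F) ! k"
  have card_f: "card (f ` F) = card F" and card_g: "card (g ` F) = card F"
    using assms(2,3) by (simp_all add: card_image)
  define G where "G = {C\<in>F. g C \<le> ?b}"
  have "?b \<in> g ` F"
    using nth_sorted_list_of_set_mem[of "g ` F" k] assms(1,5) card_g by simp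
  then have "g ` G = insert ?b {y\<in>g ` F. y < ?b}"
    unfolding G_def by auto
  then have "card (g ` G) = Suc k"
    using card_less_nth_sorted_list_of_set[of "g ` F" k] assms(1,5) card_g by simp
  moreover have "card (f ` G) = card (g ` G)"
    using assms(2,3) by (simp add: G_def card_image inj_on_subset)
  moreover have "f ` G \<subseteq> {y\<in>f ` F. y < ?b}"
    using assms(4) unfolding G_def by fastforce
  moreover have "finite {y\<in>f ` F. y < ?b}"
    using assms(1) by simp
  ultimately have less_b: "k < card {y\<in>f ` F. y < ?b}"
    using card_mono[of "{y\<in>f ` F. y < ?b}" "f ` G"] by simp
  have less_a: "card {y\<in>f ` F. y < ?a} = k"
    using card_less_nth_sorted_list_of_set[of "f ` F" k] assms(1,5) card_f by simp
  show ?thesis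
  proof (rule ccontr)
    assume "\<not> ?a < ?b"
    then have "{y\<in>f ` F. y < ?b} \<subseteq> {y\<in>f ` F. y < ?a}" by auto
    then have "card {y\<in>f ` F. y < ?b} \<le> k"
      using card_mono[of "{y\<in>f ` F. y < ?a}"] assms(1) less_a by simp
    then show False using less_b by simp
  qed
qed

lemma sorted_wrt_grid_diagonal:
  fixes a :: "nat \<Rightarrow> nat \<Rightarrow> 'a::linorder"
  assumes rows: "\<And>j. j < t \<Longrightarrow> strict_mono_on {..<m} (a j)"
    and cols: "\<And>j i. Suc j < t \<Longrightarrow> i < m \<Longrightarrow> a j i < a (Suc j) i"
    and r: "sorted_wrt (<) r" "length r = t" "set r \<subseteq> {..<m}"
  shows "sorted_wrt (<) (map (\<lambda>j. a j (r ! j)) [0..<t])"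
proof -
  have "a j (r ! j) < a (Suc j) (r ! Suc j)" if j: "Suc j < t" for j
  proof -
    have "r ! j < r ! Suc j" "r ! j < m" "r ! Suc j < m"
      using sorted_wrt_nth_less[OF r(1)] nth_mem[of _ r] r(2,3) j by force+
    then have "a j (r ! j) < a j (r ! Suc j)"
      using rows[of j] j by (simp add: strict_mono_on_def)
    also have "\<dots> < a (Suc j) (r ! Suc j)"
      using cols j \<open>r ! Suc j < m\<close> by simp
    finally show ?thesis .
  qed
  then show ?thesis by (simp add: sorted_wrt_iff_nth_Suc_transp)
qed

definition grid_transversal :: "(nat \<Rightarrow> nat \<Rightarrow> 'a) \<Rightarrow> nat \<Rightarrow> nat set \<Rightarrow> 'a set" where
  "grid_transversal a t I = (\<lambda>j. a j (sorted_list_of_set I ! j)) ` {..<t}"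

lemma sorted_list_of_set_grid_transversal:
  fixes a :: "nat \<Rightarrow> nat \<Rightarrow> 'a::linorder"
  assumes rows: "\<And>j. j < t \<Longrightarrow> strict_mono_on {..<m} (a j)"
    and cols: "\<And>j i. Suc j < t \<Longrightarrow> i < m \<Longrightarrow> a j i < a (Suc j) i"
    and I: "I \<subseteq> {..<m}" "card I = t"
  shows "sorted_list_of_set (grid_transversal a t I) = map (\<lambda>j. a j (sorted_list_of_set I ! j)) [0..<t]"
proof -
  define xs where "xs = map (\<lambda>j. a j (sorted_list_of_set I ! j)) [0..<t]"
  have "finite I" using I(1) finite_subset by blast
  then have "sorted_wrt (<) xs"
    unfolding xs_def using I by (intro sorted_wrt_grid_diagonal[of t m a, OF rows cols]) auto
  then have "sorted_list_of_set (set xs) = xs"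
    by (simp add: sorted_list_of_set.idem_if_sorted_distinct strict_sorted_iff)
  moreover have "grid_transversal a t I = set xs"
    by (simp add: xs_def grid_transversal_def atLeast0LessThan)
  ultimately show ?thesis by (simp add: xs_def)
qed

lemma inj_on_grid_transversal:
  fixes a :: "nat \<Rightarrow> nat \<Rightarrow> 'a::linorder"
  assumes rows: "\<And>j. j < t \<Longrightarrow> strict_mono_on {..<m} (a j)"
    and cols: "\<And>j i. Suc j < t \<Longrightarrow> i < m \<Longrightarrow> a j i < a (Suc j) i"
  shows "inj_on (grid_transversal a t) {I. I \<subseteq> {..<m} \<and> card I = t}"
proof (rule inj_onI)
  fix I J assume I: "I \<in> {I. I \<subseteq> {..<m} \<and> card I = t}" and J: "J \<in> {I. I \<subseteq> {..<m} \<and> card I = t}"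
    and eq: "grid_transversal a t I = grid_transversal a t J"
  have fin: "finite I" "finite J" using I J finite_subset by auto
  have "sorted_list_of_set I = sorted_list_of_set J"
  proof (rule nth_equalityI)
    show "length (sorted_list_of_set I) = length (sorted_list_of_set J)"
      using I J by simp
    fix j assume "j < length (sorted_list_of_set I)"
    then have j: "j < t" using I by simp
    have "a j (sorted_list_of_set I ! j) = a j (sorted_list_of_set J ! j)"
      using arg_cong[OF eq, of "\<lambda>D. sorted_list_of_set D ! j"] j
        sorted_list_of_set_grid_transversal[of t m a, OF rows cols] I J
      by simp
    moreover have "sorted_list_of_set I ! j \<in> {..<m}" "sorted_list_of_set J ! j \<in> {..<m}"
      using nth_sorted_list_of_set_mem[of I j] nth_sorted_list_of_set_mem[of J j] fin I J j by auto
    ultimately show "sorted_list_of_set I ! j = sorted_list_of_set J ! j"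
      using inj_onD[OF strict_mono_on_imp_inj_on[OF rows[OF j]]] by simp
  qed
  then show "I = J" using fin by (metis set_sorted_list_of_set)
qed

lemma binomial_le_card_grid_transversals:
  fixes a :: "nat \<Rightarrow> nat \<Rightarrow> 'a::linorder"
  assumes rows: "\<And>j. j < t \<Longrightarrow> strict_mono_on {..<m} (a j)"
    and cols: "\<And>j i. Suc j < t \<Longrightarrow> i < m \<Longrightarrow> a j i < a (Suc j) i"
  shows "m choose t \<le>
    card {D. finite D \<and> card D = t \<and> (\<forall>j<t. sorted_list_of_set D ! j \<in> a j ` {..<m})}"
    (is "_ \<le> card ?D")
proof -
  let ?Is = "{I. I \<subseteq> {..<m} \<and> card I = t}"
  have "grid_transversal a t I \<in> ?D" if I: "I \<in> ?Is" for I
  proof -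
    have I': "I \<subseteq> {..<m}" "card I = t" using I by auto
    note sorted = sorted_list_of_set_grid_transversal[of t m a I, OF rows cols I']
    have "card (grid_transversal a t I) = t"
      using arg_cong[OF sorted, of length] by simp
    moreover have "sorted_list_of_set I ! j < m" if "j < t" for j
      using nth_sorted_list_of_set_mem[of I j] finite_subset[of I] I that by auto
    ultimately show ?thesis using sorted I by (simp add: grid_transversal_def)
  qed
  moreover have "finite ?D"
  proof (rule finite_subset)
    show "?D \<subseteq> Pow (\<Union>j<t. a j ` {..<m})"
    proof (intro subsetI PowI)
      fix D x assume D: "D \<in> ?D" and "x \<in> D"
      then obtain j where "j < t" "x = sorted_list_of_set D ! j"
        by (auto elim: obtain_nth_sorted_list_of_set)
      then show "x \<in> (\<Union>j<t. a j ` {..<m})" using D by (auto intro!: bexI[of _ j])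
    qed
  qed simp
  ultimately have "card ?Is \<le> card ?D"
    using inj_on_grid_transversal[of t m a, OF rows cols] by (intro card_inj_on_le) auto
  then show ?thesis using n_subsets[of "{..<m}" t] by simp
qed

lemma finite_copies: "finite {C. is_copy A s t T n C}"
  by (rule finite_subset[of _ "Pow {..<n}"]) (auto simp: is_copy_def)

lemma one_le_num_copies:
  assumes "is_copy A s t T n C"
  shows "1 \<le> num_copies A s t T n"
  using assms finite_copies[of A s t T n] card_gt_0_iff unfolding num_copies_def
  by (metis (mono_tags) Suc_leI empty_iff mem_Collect_eq One_nat_def)

lemma num_copies_no_rows: "num_copies A 0 t T n = n choose t"
proof -
  have "{C. is_copy A 0 t T n C} = {C. C \<subseteq> {..<n} \<and> card C = t}"
    by (auto simp: is_copy_def)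
  then show ?thesis unfolding num_copies_def using n_subsets[of "{..<n}" t] by simp
qed

lemma binomial_card_le_card_transversals:
  fixes F :: "'a::linorder set set"
  assumes "finite F" and disjoint: "pairwise disjnt F" and card: "\<And>C. C \<in> F \<Longrightarrow> card C = t"
  shows "card F choose t \<le> card {D. finite D \<and> card D = t \<and>
      (\<forall>j<t. \<exists>C\<in>F. sorted_list_of_set D ! j = sorted_list_of_set C ! j)}"
    (is "_ \<le> card ?D")
proof -
  define col :: "nat \<Rightarrow> 'a set \<Rightarrow> 'a" where "col j C = sorted_list_of_set C ! j" for j C
  define a where "a j i = sorted_list_of_set (col j ` F) ! i" for j i
  have fin: "finite C" if "C \<in> F" "j < t" for C j
    using card[OF that(1)] that(2) card_ge_0_finite[of C] by simp
  have col_less: "col j C < col (Suc j) C" if "C \<in> F" "Suc j < t" for C j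
    using fin[OF that] card that sorted_wrt_nth_less[OF strict_sorted_list_of_set[of C]]
    unfolding col_def by simp
  have col_inj: "inj_on (col j) F" if "j < t" for j
    unfolding col_def using disjoint fin card that by (intro inj_on_nth_sorted_list_of_set) auto
  have card_col: "card (col j ` F) = card F" if "j < t" for j
    using col_inj[OF that] by (simp add: card_image)
  have rows: "strict_mono_on {..<card F} (a j)" if "j < t" for j
    using strict_mono_on_nth_sorted_list_of_set[of "col j ` F"] card_col[OF that] \<open>finite F\<close>
    unfolding a_def by simp
  have cols: "a j i < a (Suc j) i" if "Suc j < t" "i < card F" for j i
    unfolding a_def using that \<open>finite F\<close> col_less col_inj
    by (intro nth_sorted_list_of_image_less) auto
  have grid_in_cols: "a j i \<in> col j ` F" if j: "j < t" and i: "i < card F" for j i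
    using nth_sorted_list_of_set_mem[of "col j ` F" i] i card_col[OF j] \<open>finite F\<close>
    unfolding a_def by simp
  have "card F choose t \<le>
      card {D. finite D \<and> card D = t \<and> (\<forall>j<t. sorted_list_of_set D ! j \<in> a j ` {..<card F})}"
    by (rule binomial_le_card_grid_transversals[of t "card F" a, OF rows cols])
  also have "\<dots> \<le> card ?D"
  proof (rule card_mono)
    show "finite ?D"
    proof (rule finite_subset)
      show "?D \<subseteq> Pow (\<Union>j<t. col j ` F)"
      proof (intro subsetI PowI)
        fix D x assume D: "D \<in> ?D" and "x \<in> D"
        then obtain j where "j < t" "x = sorted_list_of_set D ! j"
          by (auto elim: obtain_nth_sorted_list_of_set)
        then show "x \<in> (\<Union>j<t. col j ` F)" using D unfolding col_def by (auto intro!: bexI[of _ j])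
      qed
    qed (use \<open>finite F\<close> in simp)
    show "{D. finite D \<and> card D = t \<and> (\<forall>j<t. sorted_list_of_set D ! j \<in> a j ` {..<card F})} \<subseteq> ?D"
      using grid_in_cols unfolding col_def by fastforce
  qed
  finally show ?thesis .
qed

lemma binomial_card_le_num_copies:
  assumes "0 < s" and "finite F" and copies: "\<forall>C\<in>F. is_copy A s t T n C"
    and disjoint: "pairwise (\<lambda>C D. copy_entries s C \<inter> copy_entries s D = {}) F"
  shows "card F choose t \<le> num_copies A s t T n"
proof -
  have "pairwise disjnt F"
    using disjoint \<open>0 < s\<close> unfolding pairwise_def disjnt_def copy_entries_def by blast
  then have "card F choose t \<le> card {D. finite D \<and> card D = t \<and>
      (\<forall>j<t. \<exists>C\<in>F. sorted_list_of_set D ! j = sorted_list_of_set C ! j)}"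
    using copies \<open>finite F\<close> by (intro binomial_card_le_card_transversals) (auto simp: is_copy_def)
  also have "\<dots> \<le> num_copies A s t T n"
    unfolding num_copies_def
  proof (intro card_mono finite_copies subsetI CollectI)
    fix D assume "D \<in> {D. finite D \<and> card D = t \<and>
      (\<forall>j<t. \<exists>C\<in>F. sorted_list_of_set D ! j = sorted_list_of_set C ! j)}"
    then have D: "finite D" "card D = t"
      and column: "\<And>j. j < t \<Longrightarrow> \<exists>C\<in>F. sorted_list_of_set D ! j = sorted_list_of_set C ! j"
      by auto
    have "D \<subseteq> {..<n}"
    proof
      fix x assume "x \<in> D"
      then obtain j where j: "j < t" "x = sorted_list_of_set D ! j"
        using D by (auto elim: obtain_nth_sorted_list_of_set)
      then obtain C where C: "C \<in> F" "x = sorted_list_of_set C ! j"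
        using column by auto
      then have "card C = t" using copies by (simp add: is_copy_def)
      then have "x \<in> C"
        using nth_sorted_list_of_set_mem[of C j] card_ge_0_finite[of C] j(1) C(2) by simp
      then show "x \<in> {..<n}" using C(1) copies by (auto simp: is_copy_def)
    qed
    moreover have "T r (sorted_list_of_set D ! j) = A r j" if "r < s" "j < t" for r j
      using column[OF that(2)] copies that unfolding is_copy_def by auto
    ultimately show "is_copy A s t T n D"
      using D(2) by (simp add: is_copy_def)
  qed
  finally show ?thesis .
qed

lemma power_div_le_max_one_binomial:
  assumes "0 < k"
  shows "(real n / real k) ^ k \<le> max 1 (real (n choose k))"
proof (cases "k \<le> n")
  case True
  then have "(real n / real k) ^ k \<le> real (n choose k)"
    by (rule binomial_ge_n_over_k_pow_k)
  then show ?thesis by (simp add: le_max_iff_disj)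
next
  case False
  then have "(real n / real k) ^ k \<le> 1" by (intro power_le_one) auto
  then show ?thesis by simp
qed

lemma inverse_bound_le_power:
  fixes \<epsilon> x :: real
  assumes "0 < k" "0 < \<epsilon>" "0 \<le> x"
  shows "1 / (real k ^ k * (1 + (1 / \<epsilon>) ^ k)) * x ^ k \<le> (min 1 \<epsilon> * x / real k) ^ k"
proof -
  have "1 \<le> min 1 \<epsilon> ^ k * (1 + (1 / \<epsilon>) ^ k)"
  proof (cases "\<epsilon> \<le> 1")
    case True
    then have "min 1 \<epsilon> ^ k * (1 + (1 / \<epsilon>) ^ k) = \<epsilon> ^ k + 1"
      using assms(2) by (simp add: algebra_simps power_one_over)
    then show ?thesis using assms(2) by simp
  qed simp
  moreover have "0 < 1 + (1 / \<epsilon>) ^ k"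
    using assms(2) by (simp add: add_pos_nonneg)
  ultimately have "1 / (1 + (1 / \<epsilon>) ^ k) \<le> min 1 \<epsilon> ^ k"
    by (simp add: divide_le_eq)
  then have "1 / (1 + (1 / \<epsilon>) ^ k) * (x ^ k / real k ^ k) \<le> min 1 \<epsilon> ^ k * (x ^ k / real k ^ k)"
    using assms by (intro mult_right_mono) auto
  then show ?thesis by (simp add: power_divide power_mult_distrib mult_ac)
qed

lemma num_copies_lower_bound:
  fixes \<epsilon> :: real
  assumes "0 < \<epsilon>" and "finite F" and copies: "\<forall>C\<in>F. is_copy A s t T n C"
    and disjoint: "pairwise (\<lambda>C D. copy_entries s C \<inter> copy_entries s D = {}) F"
    and many: "\<epsilon> * real n \<le> real (card F)"
  shows "1 / (real t ^ t * (1 + (1 / \<epsilon>) ^ t)) * real n ^ t \<le> real (num_copies A s t T n)"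
proof (cases "t = 0")
  case True
  then have "is_copy A s t T n {}" by (simp add: is_copy_def)
  then show ?thesis using one_le_num_copies True by fastforce
next
  case False
  show ?thesis
  proof (cases "F = {}")
    case True
    then have "n = 0" using many \<open>0 < \<epsilon>\<close> by (simp add: mult_le_0_iff)
    then show ?thesis using False by (simp add: power_0_left)
  next
    case False
    then have one: "1 \<le> num_copies A s t T n" using copies one_le_num_copies by blast
    obtain m where m: "min 1 \<epsilon> * real n \<le> real m" "m choose t \<le> num_copies A s t T n"
    proof (cases "s = 0")
      case True
      \<comment> \<open>Without rows the disjointness hypothesis is void, but then every t-set of columns is a copy.\<close>
      have "min 1 \<epsilon> * real n \<le> real n"
        using \<open>0 < \<epsilon>\<close> by (intro mult_left_le_one_le) auto
      then show ?thesis
        by (rule that) (simp add: True num_copies_no_rows)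
    next
      case False
      then show ?thesis
        using binomial_card_le_num_copies[OF _ assms(2-4)] many \<open>0 < \<epsilon>\<close>
        by (intro that[of "card F"]) (auto intro: order_trans[OF mult_right_mono[OF min.cobounded2]])
    qed
    have "1 / (real t ^ t * (1 + (1 / \<epsilon>) ^ t)) * real n ^ t \<le> (min 1 \<epsilon> * real n / real t) ^ t"
      using inverse_bound_le_power \<open>t \<noteq> 0\<close> \<open>0 < \<epsilon>\<close> by simp
    also have "\<dots> \<le> (real m / real t) ^ t"
      using m(1) \<open>0 < \<epsilon>\<close> by (intro power_mono divide_right_mono) auto
    also have "\<dots> \<le> max 1 (real (m choose t))"
      using power_div_le_max_one_binomial \<open>t \<noteq> 0\<close> by simp
    also have "\<dots> \<le> real (num_copies A s t T n)"
      using one m(2) by simp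
    finally show ?thesis .
  qed
qed

theorem mainTheorem7:
  fixes A :: "nat \<Rightarrow> nat \<Rightarrow> 'a" and s t :: nat
  shows "\<exists>p :: real poly. (\<forall>x>0. poly p x > 0) \<and>
    (\<forall>\<epsilon>::real. \<epsilon> > 0 \<longrightarrow>
      (\<forall>(n::nat) (T :: nat \<Rightarrow> nat \<Rightarrow> 'a) (F :: nat set set).
        (\<forall>C\<in>F. is_copy A s t T n C) \<and>
        pairwise (\<lambda>C D. copy_entries s C \<inter> copy_entries s D = {}) F \<and>
        finite F \<and> real (card F) \<ge> \<epsilon> * real n
        \<longrightarrow> real (num_copies A s t T n) \<ge> (1 / poly p (1 / \<epsilon>)) * real n ^ t))"
proof -
  define p :: "real poly" where "p = smult (real t ^ t) (1 + monom 1 t)"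
  have poly_p: "poly p x = real t ^ t * (1 + x ^ t)" for x
    by (simp add: p_def poly_monom)
  show ?thesis
  proof (intro exI[of _ p] conjI allI impI)
    fix x :: real assume "0 < x"
    then show "0 < poly p x"
      unfolding poly_p by (cases "t = 0") (auto intro!: mult_pos_pos add_pos_pos)
  next
    fix \<epsilon> :: real and n T and F :: "nat set set"
    assume "0 < \<epsilon>" and "(\<forall>C\<in>F. is_copy A s t T n C) \<and>
        pairwise (\<lambda>C D. copy_entries s C \<inter> copy_entries s D = {}) F \<and>
        finite F \<and> \<epsilon> * real n \<le> real (card F)"
    then show "1 / poly p (1 / \<epsilon>) * real n ^ t \<le> real (num_copies A s t T n)"
      unfolding poly_p by (intro num_copies_lower_bound) auto
  qed
qed

end
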